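(* Let $L \ge N$, let $\mathbf{T} \in \mathbb{R}^{L\times N}$ have full rank $N$, and let $\gamma>0$. Define on $\mathbb{R}^N$ the norm $\|\mathbf{x}\|_{\mathbf{T}} := \|\mathbf{T}\mathbf{x}\|_2$. Then the operators $\mathbf{T}^{\dagger}S_\gamma\mathbf{T}$ and $\mathbf{I}-\mathbf{T}^{\dagger}S_\gamma\mathbf{T}$ are firmly non-expansive with respect to $\|\cdot\|_{\mathbf{T}}$, i.e., for all $\mathbf{x},\mathbf{y}\in\mathbb{R}^N$, $$\|\mathbf{T}^{\dagger}S_\gamma\mathbf{T}\mathbf{x} - \mathbf{T}^{\dagger}S_\gamma\mathbf{T}\mathbf{y}\|_{\mathbf{T}}^2 + \|(\mathbf{I}-\mathbf{T}^{\dagger}S_\gamma\mathbf{T})\mathbf{x} - (\mathbf{I}-\mathbf{T}^{\dagger}S_\gamma\mathbf{T})\mathbf{y}\|_{\mathbf{T}}^2 \le \|\mathbf{x}-\mathbf{y}\|_{\mathbf{T}}^2.$$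
   Context: $\mathbf{T}^*$ is the transpose, $\mathbf{T}^{\dagger}=(\mathbf{T}^*\mathbf{T})^{-1}\mathbf{T}^*$ the Moore–Penrose inverse, $\mathbf{I}$ the $N\times N$ identity, $\|\cdot\|_2$ the Euclidean norm on $\mathbb{R}^L$. $S_\gamma:\mathbb{R}^L\to\mathbb{R}^L$ is componentwise soft shrinkage: $[S_\gamma(\mathbf{y})]_j = y_j-\gamma$ if $y_j\ge\gamma$, $y_j+\gamma$ if $y_j\le-\gamma$, $0$ if $|y_j|<\gamma$. *)

theory Defs
  imports "HOL-Analysis.Analysis"
begin

definition soft_shrink :: "real \<Rightarrow> real ^ 'l \<Rightarrow> real ^ 'l" where
  "soft_shrink \<gamma> y = (\<chi> j. if y $ j \<ge> \<gamma> then y $ j - \<gamma>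
                        else if y $ j \<le> - \<gamma> then y $ j + \<gamma> else 0)"

text \<open>Moore--Penrose inverse of a full column rank matrix: (T^* T)^{-1} T^*.\<close>
definition mp_inverse :: "real ^ 'n ^ 'l \<Rightarrow> real ^ 'l ^ 'n" where
  "mp_inverse T = matrix_inv (transpose T ** T) ** transpose T"

definition T_norm :: "real ^ 'n ^ 'l \<Rightarrow> real ^ 'n \<Rightarrow> real" where
  "T_norm T x = norm (T *v x)"

end

(* Write b = S(Tx) - S(Ty) and a = T(x - y). Soft shrinkage, being the proximal map of
   \<gamma>|.|_1, is firmly non-expansive: |b|^2 \<le> <a, b>. Applying T to the two differences in
   the theorem gives p = \<Pi>b and a - p, where \<Pi> = T T\<^sup>\<dagger> is the orthogonal projection onto
   range T. Since a lies in that range, <a, p> = <a, b>, and |p| \<le> |b|; hence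
   |p|^2 \<le> <a, p>, which is equivalent to |p|^2 + |a - p|^2 \<le> |a|^2. *)

theory Submission
  imports Defs
begin

lemma soft_shrink_firmly_nonexpansive:
  fixes u v :: "real ^ 'l"
  assumes "\<gamma> \<ge> 0"
  shows "(norm (soft_shrink \<gamma> u - soft_shrink \<gamma> v))\<^sup>2
           \<le> inner (u - v) (soft_shrink \<gamma> u - soft_shrink \<gamma> v)"
proof -
  let ?d = "soft_shrink \<gamma> u - soft_shrink \<gamma> v"
  have "?d $ i * ?d $ i \<le> (u - v) $ i * ?d $ i" for i
  proof -
    \<comment> \<open>Both the shrinkage and its residual t \<mapsto> t - s t (a clamp to [-\<gamma>, \<gamma>]) are monotone,
        so both factors below have the sign of u_i - v_i.\<close>
    have "0 \<le> ?d $ i * ((u - v) $ i - ?d $ i)"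
      using assms by (auto simp: soft_shrink_def zero_le_mult_iff)
    then show ?thesis by (simp add: algebra_simps)
  qed
  then have "inner ?d ?d \<le> inner (u - v) ?d"
    unfolding inner_vec_def by (intro sum_mono) simp
  then show ?thesis by (simp add: power2_norm_eq_inner)
qed

lemma matrix_inv_right:
  fixes A :: "'a::semiring_1 ^ 'n ^ 'm"
  assumes "invertible A"
  shows "A ** matrix_inv A = mat 1"
proof -
  have "\<exists>A'. A ** A' = mat 1 \<and> A' ** A = mat 1"
    using assms unfolding invertible_def by blast
  from someI_ex[OF this] show ?thesis
    unfolding matrix_inv_def by blast
qed

lemma inner_transpose_mult_self:
  fixes T :: "real ^ 'n ^ 'l"
  shows "inner v ((transpose T ** T) *v w) = inner (T *v v) (T *v w)"
  by (metis dot_lmul_matrix inner_commute matrix_vector_mul_assoc transpose_matrix_vector)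

lemma invertible_transpose_mult_self:
  fixes T :: "real ^ 'n ^ 'l"
  assumes "inj ((*v) T)"
  shows "invertible (transpose T ** T)"
proof -
  have "v = 0" if "(transpose T ** T) *v v = 0" for v
  proof -
    have "inner (T *v v) (T *v v) = 0"
      using that inner_transpose_mult_self[of v T v] by simp
    then have "T *v v = 0" by simp
    then show "v = 0"
      using assms by (metis inj_eq matrix_vector_mult_0_right)
  qed
  then show ?thesis
    unfolding invertible_left_inverse matrix_left_invertible_ker by blast
qed

lemma inner_range_mp_inverse:
  fixes T :: "real ^ 'n ^ 'l"
  assumes "inj ((*v) T)"
  shows "inner (T *v d) (T *v (mp_inverse T *v b)) = inner (T *v d) b"
proof -
  let ?G = "transpose T ** T"
  have "inner (T *v d) (T *v (mp_inverse T *v b))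
          = inner d (?G *v (matrix_inv ?G *v (transpose T *v b)))"
    unfolding inner_transpose_mult_self mp_inverse_def
    by (simp add: matrix_vector_mul_assoc[symmetric])
  also have "\<dots> = inner d (transpose T *v b)"
    using matrix_inv_right[OF invertible_transpose_mult_self[OF assms]]
    by (simp add: matrix_vector_mul_assoc)
  also have "\<dots> = inner (T *v d) b"
    by (metis dot_lmul_matrix inner_commute transpose_matrix_vector)
  finally show ?thesis .
qed

lemma norm_range_mp_inverse_le:
  fixes T :: "real ^ 'n ^ 'l"
  assumes "inj ((*v) T)"
  shows "norm (T *v (mp_inverse T *v b)) \<le> norm b"
proof -
  let ?p = "T *v (mp_inverse T *v b)"
  have "(norm ?p)\<^sup>2 = inner ?p b"
    using inner_range_mp_inverse[OF assms, of "mp_inverse T *v b" b]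
    by (simp add: power2_norm_eq_inner)
  also have "\<dots> \<le> norm ?p * norm b"
    by (rule norm_cauchy_schwarz)
  finally show ?thesis
    by (cases "?p = 0") (simp_all add: power2_eq_square mult_le_cancel_left)
qed

lemma firmly_nonexpansive_iff:
  fixes a p :: "'a::real_inner"
  shows "(norm p)\<^sup>2 + (norm (a - p))\<^sup>2 \<le> (norm a)\<^sup>2 \<longleftrightarrow> (norm p)\<^sup>2 \<le> inner a p"
  by (simp add: power2_norm_eq_inner inner_diff_left inner_diff_right inner_commute)

lemma firmly_nonexpansive_range_mp_inverse:
  fixes T :: "real ^ 'n ^ 'l"
  assumes "inj ((*v) T)"
    and "(norm b)\<^sup>2 \<le> inner (T *v d) b"
  defines "p \<equiv> T *v (mp_inverse T *v b)"
  shows "(norm p)\<^sup>2 + (norm (T *v d - p))\<^sup>2 \<le> (norm (T *v d))\<^sup>2"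
proof -
  have "(norm p)\<^sup>2 \<le> (norm b)\<^sup>2"
    unfolding p_def using norm_range_mp_inverse_le[OF assms(1)] by (simp add: power_mono)
  also note assms(2)
  also have "inner (T *v d) b = inner (T *v d) p"
    unfolding p_def using inner_range_mp_inverse[OF assms(1)] by simp
  finally show ?thesis
    unfolding firmly_nonexpansive_iff .
qed

theorem proposition2p3:
  fixes T :: "real ^ 'n ^ 'l" and \<gamma> :: real and x y :: "real ^ 'n"
  assumes "CARD('n) \<le> CARD('l)"
    and "rank T = CARD('n)"
    and "\<gamma> > 0"
  shows "let P = (\<lambda>z. mp_inverse T *v soft_shrink \<gamma> (T *v z));
             Q = (\<lambda>z. z - P z)
         in (T_norm T (P x - P y))\<^sup>2 + (T_norm T (Q x - Q y))\<^sup>2 \<le> (T_norm T (x - y))\<^sup>2"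
proof -
  have inj: "inj ((*v) T)"
    using assms(2) full_rank_injective by blast
  define b where "b = soft_shrink \<gamma> (T *v x) - soft_shrink \<gamma> (T *v y)"
  have "(norm b)\<^sup>2 \<le> inner (T *v (x - y)) b"
    unfolding b_def matrix_vector_mult_diff_distrib
    using assms(3) by (simp add: soft_shrink_firmly_nonexpansive)
  from firmly_nonexpansive_range_mp_inverse[OF inj this]
  show ?thesis
    unfolding Let_def T_norm_def b_def
    by (simp add: matrix_vector_mult_diff_distrib algebra_simps)
qed

end
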